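(* Let $R$ be a finite commutative local Frobenius ring with residue field $\mathbb{F}_q$. Let $\{C_1,C_2\}$ be a pair of linear codes over $R$ of length $n$ such that $C_1+C_2=R^n$. If $\{C_1,C_2\}$ is a $0$-DLIP, then $C_1$ and $C_2$ are free.
   Context: A linear code of length $n$ over $R$ is an $R$-submodule of $R^n$; it is free if it is a free $R$-module. $\dim(C):=\log_q|C|$, and a pair $\{C,D\}$ is a $0$-DLIP if $\dim(C\cap D)=0$, i.e. $C\cap D=\{\mathbf{0}\}$. *)

theory Defs
  imports "HOL-Analysis.Analysis"
begin

definition is_ideal :: "'a::comm_ring_1 set \<Rightarrow> bool" where
  "is_ideal I \<longleftrightarrow> 0 \<in> I \<and> (\<forall>x\<in>I. \<forall>y\<in>I. x + y \<in> I) \<and> (\<forall>r. \<forall>x\<in>I. r * x \<in> I)"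

definition maximal_ideal :: "'a::comm_ring_1 set \<Rightarrow> bool" where
  "maximal_ideal M \<longleftrightarrow> is_ideal M \<and> M \<noteq> UNIV \<and>
     (\<forall>J. is_ideal J \<and> M \<subseteq> J \<longrightarrow> J = M \<or> J = UNIV)"

definition local_ring :: "'a::comm_ring_1 itself \<Rightarrow> bool" where
  "local_ring _ \<longleftrightarrow> (\<exists>!M::'a set. maximal_ideal M)"

definition max_ideal :: "'a::comm_ring_1 itself \<Rightarrow> 'a set" where
  "max_ideal _ = (THE M::'a set. maximal_ideal M)"

definition minimal_ideal :: "'a::comm_ring_1 set \<Rightarrow> bool" where
  "minimal_ideal I \<longleftrightarrow> is_ideal I \<and> I \<noteq> {0} \<and>
     (\<forall>J. is_ideal J \<and> J \<subseteq> I \<longrightarrow> J = {0} \<or> J = I)"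

definition annihilator :: "'a::comm_ring_1 set \<Rightarrow> 'a set" where
  "annihilator S = {r. \<forall>s\<in>S. r * s = 0}"

text \<open>Frobenius for a finite commutative local ring R with maximal ideal m:
  soc(R) = ann(m) is isomorphic to R/m as an R-module, i.e. ann(m) is a simple
  R-module, i.e. a minimal ideal.\<close>
definition frobenius_local :: "'a::comm_ring_1 itself \<Rightarrow> bool" where
  "frobenius_local T \<longleftrightarrow> local_ring T \<and> minimal_ideal (annihilator (max_ideal T))"

text \<open>q = size of the residue field R/m (number of cosets of m).\<close>
definition residue_card :: "'a::comm_ring_1 itself \<Rightarrow> nat" where
  "residue_card T = card ((\<lambda>x. {y. x - y \<in> max_ideal T}) ` (UNIV::'a set))"

definition vscale :: "'a::comm_ring_1 \<Rightarrow> 'a ^ 'n \<Rightarrow> 'a ^ 'n" where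
  "vscale c v = (\<chi> i. c * v $ i)"

lemma module_vscale: "module (vscale :: 'a::comm_ring_1 \<Rightarrow> 'a ^ 'n \<Rightarrow> 'a ^ 'n)"
  by unfold_locales (simp_all add: vscale_def vec_eq_iff algebra_simps)

definition linear_code :: "('a::comm_ring_1 ^ 'n) set \<Rightarrow> bool" where
  "linear_code C \<longleftrightarrow> module.subspace vscale C"

definition free_code :: "('a::comm_ring_1 ^ 'n) set \<Rightarrow> bool" where
  "free_code C \<longleftrightarrow> (\<exists>B\<subseteq>C. module.independent vscale B \<and> module.span vscale B = C)"

definition code_dim :: "('a::comm_ring_1 ^ 'n) set \<Rightarrow> real" where
  "code_dim C = log (real (residue_card TYPE('a))) (real (card C))"

end

theory Submission
  imports Defs
begin

text \<open>
  As \<open>dim(C\<^sub>1 \<inter> C\<^sub>2) = 0\<close>, \<open>R\<^sup>n\<close> is the direct sum of \<open>C\<^sub>1\<close> and \<open>C\<^sub>2\<close>, and over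
  a local ring every direct summand of a finite free module is free.
  The latter goes by induction on a basis \<open>E\<close> of \<open>M \<oplus> N\<close>. Write \<open>e \<in> E\<close> as
  \<open>e = a + b\<close> with \<open>a \<in> M\<close> and \<open>b \<in> N\<close>. The \<open>e\<close>-coordinates of \<open>a\<close> and \<open>b\<close> sum to
  \<open>1\<close>, so in a local ring one of them, say that of \<open>v \<in> {a, b}\<close>, is a unit. The projection
  along \<open>v\<close> that kills the \<open>e\<close>-coordinate turns the decomposition into
  \<open>proj M \<oplus> proj N = span (E - {e})\<close>, so \<open>proj M\<close> is free by induction. If \<open>v \<in> M\<close>,
  then \<open>M = R v \<oplus> proj M\<close>; if \<open>v \<in> N\<close>, then \<open>proj\<close> is injective on \<open>M\<close>.
\<close>

section \<open>Finite local rings\<close>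

lemma is_ideal_add: "is_ideal I \<Longrightarrow> x \<in> I \<Longrightarrow> y \<in> I \<Longrightarrow> x + y \<in> I"
  unfolding is_ideal_def by blast

lemma is_ideal_mult: "is_ideal I \<Longrightarrow> x \<in> I \<Longrightarrow> r * x \<in> I"
  unfolding is_ideal_def by blast

lemma is_ideal_UNIV_iff:
  assumes "is_ideal I"
  shows "I = UNIV \<longleftrightarrow> (1::'a::comm_ring_1) \<in> I"
  using is_ideal_mult[OF assms, of 1] by (metis UNIV_I UNIV_eq_I mult.right_neutral)

lemma is_ideal_principal: "is_ideal (range (\<lambda>r. r * (x::'a::comm_ring_1)))"
  unfolding is_ideal_def
proof (intro conjI ballI allI)
  show "0 \<in> range (\<lambda>r. r * x)"
    by (rule range_eqI[of _ _ 0]) simp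
next
  fix u v assume "u \<in> range (\<lambda>r. r * x)" "v \<in> range (\<lambda>r. r * x)"
  then obtain r s where "u = r * x" "v = s * x" by blast
  then have "u + v = (r + s) * x" by (simp add: distrib_right)
  then show "u + v \<in> range (\<lambda>r. r * x)" by blast
next
  fix t u assume "u \<in> range (\<lambda>r. r * x)"
  then obtain r where "u = r * x" by blast
  then have "t * u = (t * r) * x" by (simp add: mult.assoc)
  then show "t * u \<in> range (\<lambda>r. r * x)" by blast
qed

lemma one_in_principal_iff: "(1::'a::comm_ring_1) \<in> range (\<lambda>r. r * x) \<longleftrightarrow> x dvd 1"
proof
  assume "1 \<in> range (\<lambda>r. r * x)"
  then obtain r where "1 = r * x" by blast
  then have "1 = x * r" by (simp add: mult.commute)
  then show "x dvd 1" by (rule dvdI)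
next
  assume "x dvd 1"
  then obtain r where "1 = x * r" by (rule dvdE)
  then have "1 = r * x" by (simp add: mult.commute)
  then show "1 \<in> range (\<lambda>r. r * x)" by (rule range_eqI)
qed

lemma exists_maximal_ideal_superset:
  fixes I :: "'a::{comm_ring_1,finite} set"
  assumes "is_ideal I" and "I \<noteq> UNIV"
  obtains M where "maximal_ideal M" and "I \<subseteq> M"
proof -
  let ?proper = "{J. is_ideal J \<and> J \<noteq> UNIV}"
  obtain M where M: "M \<in> ?proper" "I \<subseteq> M" and max: "\<forall>J\<in>?proper. M \<subseteq> J \<longrightarrow> M = J"
    using finite_has_maximal2[of ?proper I] assms by auto
  have "maximal_ideal M"
    unfolding maximal_ideal_def using M max by blast
  then show thesis by (rule that[OF _ M(2)])
qed

lemma nonunit_in_maximal_ideal: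
  fixes x :: "'a::{comm_ring_1,finite}"
  assumes "\<not> x dvd 1"
  obtains M where "maximal_ideal M" and "x \<in> M"
proof -
  have "range (\<lambda>r. r * x) \<noteq> UNIV"
    using assms one_in_principal_iff by blast
  then obtain M where "maximal_ideal M" "range (\<lambda>r. r * x) \<subseteq> M"
    using exists_maximal_ideal_superset[OF is_ideal_principal] by blast
  moreover have "x \<in> range (\<lambda>r. r * x)"
    by (rule range_eqI[of _ _ 1]) simp
  ultimately show thesis
    using that by blast
qed

lemma local_ring_unit_or_unit:
  fixes x y :: "'a::{comm_ring_1,finite}"
  assumes "local_ring TYPE('a)" and "x + y = 1"
  shows "x dvd 1 \<or> y dvd 1"
proof (rule ccontr)
  assume "\<not> (x dvd 1 \<or> y dvd 1)"
  then have "\<not> x dvd 1" "\<not> y dvd 1" by simp_all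
  then obtain Mx My where Mx: "maximal_ideal Mx" "x \<in> Mx" and My: "maximal_ideal My" "y \<in> My"
    by (elim nonunit_in_maximal_ideal)
  have "Mx = My"
    using assms(1) Mx(1) My(1) unfolding local_ring_def by (elim ex1E) blast
  then have "1 \<in> Mx"
    using Mx My assms(2) is_ideal_add[of Mx x y] unfolding maximal_ideal_def by simp
  then show False
    using Mx(1) is_ideal_UNIV_iff unfolding maximal_ideal_def by blast
qed

lemma maximal_ideal_max_ideal:
  "local_ring TYPE('a::comm_ring_1) \<Longrightarrow> maximal_ideal (max_ideal TYPE('a))"
  unfolding local_ring_def max_ideal_def by (rule theI')

lemma residue_card_ge_2:
  assumes "local_ring TYPE('a::{comm_ring_1,finite})"
  shows "residue_card TYPE('a) \<ge> 2"
proof -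
  let ?m = "max_ideal TYPE('a)"
  let ?coset = "\<lambda>x::'a. {y. x - y \<in> ?m}"
  have m: "is_ideal ?m" "?m \<noteq> UNIV"
    using maximal_ideal_max_ideal[OF assms] unfolding maximal_ideal_def by auto
  have "- 1 \<notin> ?m"
    using m is_ideal_UNIV_iff[OF m(1)] is_ideal_mult[OF m(1), of "- 1" "- 1"] by auto
  then have "1 \<notin> ?coset 0"
    by simp
  moreover have "1 \<in> ?coset 1"
    using m(1) unfolding is_ideal_def by simp
  ultimately have "?coset 0 \<noteq> ?coset 1"
    by blast
  then have "card {?coset 0, ?coset 1} = 2"
    by simp
  moreover have "card {?coset 0, ?coset 1} \<le> card (range ?coset)"
    using rangeI[of ?coset 0] rangeI[of ?coset 1] by (intro card_mono) auto
  ultimately show ?thesis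
    unfolding residue_card_def by simp
qed

lemma code_dim_eq_0_imp_trivial:
  fixes C :: "('a::{comm_ring_1,finite} ^ 'n) set"
  assumes "local_ring TYPE('a)" and "0 \<in> C" and "code_dim C = 0"
  shows "C = {0}"
proof -
  have "ln (real (residue_card TYPE('a))) \<noteq> 0"
    using residue_card_ge_2[OF assms(1)] by simp
  then have "ln (real (card C)) = 0"
    using assms(3) unfolding code_dim_def log_def divide_eq_0_iff by blast
  moreover have "card C > 0"
    using assms(2) by (auto simp: card_gt_0_iff)
  ultimately have "card C = 1"
    by (simp add: ln_eq_zero_iff)
  then obtain c where "C = {c}"
    by (rule card_1_singletonE)
  with assms(2) show ?thesis
    by simp
qed

section \<open>Direct summands of free modules over local rings\<close>

context module
begin

definition free_subspace :: "'b set \<Rightarrow> bool" where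
  "free_subspace S \<longleftrightarrow> (\<exists>B\<subseteq>S. independent B \<and> span B = S)"

lemma independent_insertI:
  assumes B: "independent B" and a: "\<And>c. scale c a \<in> span B \<Longrightarrow> c = 0"
  shows "independent (insert a B)"
  unfolding independent_explicit_module
proof (intro allI impI)
  fix t u v
  assume t: "finite t" "t \<subseteq> insert a B" and sum_eq_0: "(\<Sum>v\<in>t. scale (u v) v) = 0" and "v \<in> t"
  let ?rest = "\<Sum>x\<in>t - {a}. scale (u x) x"
  have rest_in_span: "?rest \<in> span B"
    using t by (intro span_sum span_scale span_base) auto
  have split: "(\<Sum>x\<in>t. scale (u x) x) = (if a \<in> t then scale (u a) a else 0) + ?rest"
    using t(1) by (simp add: sum.remove)
  have ua: "u a = 0" if "a \<in> t"
  proof (rule a)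
    have "scale (u a) a = - ?rest"
      using split sum_eq_0 that by (simp add: eq_neg_iff_add_eq_0)
    then show "scale (u a) a \<in> span B"
      using rest_in_span by (simp add: span_neg)
  qed
  have "?rest = 0"
    using split sum_eq_0 ua by (cases "a \<in> t") simp_all
  then have "u x = 0" if "x \<in> t - {a}" for x
    using independentD[OF B, of "t - {a}" u x] t that by auto
  then show "u v = 0"
    using ua \<open>v \<in> t\<close> by (cases "v = a") auto
qed

lemma representation_eq_0_iff_in_span:
  assumes E0: "independent E0" and F: "insert e F \<subseteq> E0" "e \<notin> F"
    and x: "x \<in> span (insert e F)"
  shows "representation E0 x e = 0 \<longleftrightarrow> x \<in> span F"
proof -
  have rep: "representation E0 x = representation (insert e F) x"
    using representation_extend[OF E0 x F(1)] .
  have indep: "independent (insert e F)"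
    using independent_mono[OF E0 F(1)] .
  show ?thesis
  proof
    assume "representation E0 x e = 0"
    then have "{b. representation (insert e F) x b \<noteq> 0} \<subseteq> F"
      using rep representation_ne_zero by fastforce
    then have "(\<Sum>b | representation (insert e F) x b \<noteq> 0. scale (representation (insert e F) x b) b) \<in> span F"
      by (intro span_sum span_scale span_base) auto
    then show "x \<in> span F"
      using sum_nonzero_representation_eq[OF indep x] by simp
  next
    assume "x \<in> span F"
    then have "representation E0 x = representation F x"
      using representation_extend[OF E0] F(1) by blast
    then show "representation E0 x e = 0"
      using representation_ne_zero[of F x e] F(2) by auto
  qed
qed

end

lemma (in module_hom) independent_if_independent_image:
  assumes indep: "m2.independent (f ` B)" and inj: "inj_on f B"
  shows "m1.independent B"
  unfolding m1.independent_explicit_module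
proof (intro allI impI)
  fix t u v
  assume t: "finite t" "t \<subseteq> B" and sum_eq_0: "(\<Sum>v\<in>t. s1 (u v) v) = 0" and v: "v \<in> t"
  have inj_t: "inj_on f t"
    using inj t(2) by (rule inj_on_subset)
  let ?u' = "\<lambda>y. u (the_inv_into t f y)"
  have "(\<Sum>y\<in>f ` t. s2 (?u' y) y) = (\<Sum>x\<in>t. s2 (u x) (f x))"
    using inj_t by (simp add: sum.reindex the_inv_into_f_f)
  also have "\<dots> = f (\<Sum>x\<in>t. s1 (u x) x)"
    by (simp add: sum scale)
  finally have "(\<Sum>y\<in>f ` t. s2 (?u' y) y) = 0"
    using sum_eq_0 by simp
  then have "?u' (f v) = 0"
    using m2.independentD[OF indep, of "f ` t" ?u' "f v"] t v by auto
  then show "u v = 0"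
    using inj_t v by (simp add: the_inv_into_f_f)
qed

lemma (in module_hom) free_subspace_if_inj_on:
  assumes M: "m1.subspace M" and inj: "inj_on f M" and free: "m2.free_subspace (f ` M)"
  shows "m1.free_subspace M"
proof -
  obtain B' where B': "m2.independent B'" "m2.span B' = f ` M"
    using free unfolding m2.free_subspace_def by blast
  have "B' \<subseteq> f ` M"
    using B'(2) m2.span_superset by blast
  then obtain B where BM: "B \<subseteq> M" and B'_eq: "B' = f ` B"
    by (rule subset_imageE)
  have span_B: "m1.span B \<subseteq> M"
    using m1.span_minimal[OF BM M] .
  have "m1.independent B"
    using independent_if_independent_image B'(1) B'_eq inj_on_subset[OF inj BM] by blast
  moreover have "m1.span B = M"
  proof -
    have "f ` m1.span B = f ` M"
      using span_image[of B] B' B'_eq by simp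
    then show ?thesis
      using inj_on_image_eq_iff[OF inj span_B] by simp
  qed
  ultimately show ?thesis
    unfolding m1.free_subspace_def using BM by blast
qed

lemma sum_set_commute:
  "{x + y |x y. x \<in> A \<and> y \<in> B} = {x + y |x y. x \<in> B \<and> y \<in> (A::'a::ab_semigroup_add set)}"
  using add.commute by blast

text \<open>
  Coordinates are taken with respect to a basis \<open>E0\<close> of the whole module, so that \<open>proj\<close>
  is linear everywhere; \<open>w\<close> inverts the \<open>e\<close>-coordinate of \<open>v\<close>, so \<open>proj\<close> moves along
  \<open>v\<close> until the \<open>e\<close>-coordinate vanishes.
\<close>

locale coordinate_projection = module scale
  for scale :: "'a::comm_ring_1 \<Rightarrow> 'b::ab_group_add \<Rightarrow> 'b" +
  fixes E0 :: "'b set" and e v :: 'b and w :: 'a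
  assumes independent_E0: "independent E0" and span_E0: "span E0 = UNIV"
    and coeff_v: "w * representation E0 v e = 1"
begin

definition proj :: "'b \<Rightarrow> 'b" where
  "proj x = x - scale (w * representation E0 x e) v"

lemma representation_add_E0:
  "representation E0 (x + y) = (\<lambda>b. representation E0 x b + representation E0 y b)"
  using representation_add[OF independent_E0] span_E0 by simp

lemma representation_scale_E0:
  "representation E0 (scale c x) = (\<lambda>b. c * representation E0 x b)"
  using representation_scale[OF independent_E0] span_E0 by simp

lemma representation_diff_E0:
  "representation E0 (x - y) = (\<lambda>b. representation E0 x b - representation E0 y b)"
  using representation_diff[OF independent_E0] span_E0 by simp

lemma module_hom_proj: "module_hom scale scale proj"
  unfolding module_hom_iff using module_axioms
  by (simp add: proj_def representation_add_E0 representation_scale_E0 scale_left_distrib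
      scale_right_diff_distrib mult.left_commute distrib_left)

lemma representation_proj: "representation E0 (proj x) e = 0"
proof -
  have "representation E0 (proj x) e = representation E0 x e * (1 - w * representation E0 v e)"
    by (simp add: proj_def representation_diff_E0 representation_scale_E0 algebra_simps)
  then show ?thesis
    using coeff_v by simp
qed

lemma proj_decomp: "x = scale (w * representation E0 x e) v + proj x"
  by (simp add: proj_def)

lemma eq_0_if_representation_scale_eq_0:
  assumes "representation E0 (scale c v) e = 0"
  shows "c = 0"
proof -
  have "c = w * (c * representation E0 v e)"
    using coeff_v by (simp add: mult.left_commute)
  then show ?thesis
    using assms by (simp add: representation_scale_E0)
qed

lemma proj_in_span:
  assumes F: "insert e F \<subseteq> E0" "e \<notin> F"
    and "v \<in> span (insert e F)" and "x \<in> span (insert e F)"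
  shows "proj x \<in> span F"
proof -
  have "proj x \<in> span (insert e F)"
    using assms(3,4) unfolding proj_def by (intro span_diff span_scale)
  then show ?thesis
    using representation_eq_0_iff_in_span[OF independent_E0 F] representation_proj by blast
qed

lemma proj_eq_self:
  assumes F: "insert e F \<subseteq> E0" "e \<notin> F" and x: "x \<in> span F"
  shows "proj x = x"
proof -
  have "x \<in> span (insert e F)"
    using x span_mono[of F "insert e F"] by blast
  then have "representation E0 x e = 0"
    using representation_eq_0_iff_in_span[OF independent_E0 F] x by blast
  then show ?thesis
    by (simp add: proj_def)
qed

lemma proj_image_subset:
  assumes "subspace M" and "v \<in> M"
  shows "proj ` M \<subseteq> M"
  using assms unfolding proj_def by (auto intro: subspace_diff subspace_scale)

lemma proj_direct_sum:
  assumes F: "insert e F \<subseteq> E0" "e \<notin> F" and M: "subspace M" and N: "subspace N"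
    and sum: "{x + y |x y. x \<in> M \<and> y \<in> N} = span (insert e F)"
    and cap: "M \<inter> N = {0}" and v: "v \<in> M"
  shows "{x + y |x y. x \<in> proj ` M \<and> y \<in> proj ` N} = span F"
    and "proj ` M \<inter> proj ` N = {0}"
proof -
  interpret proj: module_hom scale scale proj
    by (rule module_hom_proj)
  have M_span: "M \<subseteq> span (insert e F)" and N_span: "N \<subseteq> span (insert e F)"
    using sum subspace_0[OF M] subspace_0[OF N] by force+
  show "{x + y |x y. x \<in> proj ` M \<and> y \<in> proj ` N} = span F"
  proof (intro antisym subsetI)
    fix z assume "z \<in> {x + y |x y. x \<in> proj ` M \<and> y \<in> proj ` N}"
    then obtain x y where "x \<in> M" "y \<in> N" "z = proj (x + y)"
      by (auto simp: proj.add)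
    then show "z \<in> span F"
      using F v M_span N_span by (auto intro!: proj_in_span span_add)
  next
    fix z assume z: "z \<in> span F"
    then have "z \<in> span (insert e F)"
      using span_mono[of F "insert e F"] by blast
    then obtain x y where xy: "x \<in> M" "y \<in> N" "z = x + y"
      using sum by blast
    then have "z = proj x + proj y"
      using proj_eq_self[OF F z] by (simp add: proj.add)
    then show "z \<in> {x + y |x y. x \<in> proj ` M \<and> y \<in> proj ` N}"
      using xy by blast
  qed
  show "proj ` M \<inter> proj ` N = {0}"
  proof (intro antisym subsetI)
    fix z assume "z \<in> proj ` M \<inter> proj ` N"
    then obtain x y where xy: "x \<in> M" "y \<in> N" "z = proj x" "z = proj y"
      by auto
    have "y = proj x + scale (w * representation E0 y e) v"
      using proj_decomp[of y] xy(3,4) by (simp add: add.commute)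
    also have "\<dots> \<in> M"
      using proj_image_subset[OF M v] xy(1) v M by (intro subspace_add subspace_scale) auto
    finally have "y = 0"
      using xy(2) cap by blast
    then show "z \<in> {0}"
      using xy(4) by simp
  qed (use subspace_0[OF M] subspace_0[OF N] proj.zero in force)
qed

lemma free_subspace_if_free_proj_image_of_mem:
  assumes M: "subspace M" and v: "v \<in> M" and free: "free_subspace (proj ` M)"
  shows "free_subspace M"
proof -
  obtain B where B: "independent B" "span B = proj ` M"
    using free unfolding free_subspace_def by blast
  have BM: "insert v B \<subseteq> M"
    using B(2) span_superset proj_image_subset[OF M v] v by blast
  have "independent (insert v B)"
  proof (rule independent_insertI[OF B(1)])
    fix c assume "scale c v \<in> span B"
    then obtain x where "scale c v = proj x"
      using B(2) by auto
    then show "c = 0"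
      using eq_0_if_representation_scale_eq_0 representation_proj by metis
  qed
  moreover have "span (insert v B) = M"
  proof (intro antisym subsetI)
    fix x assume "x \<in> span (insert v B)"
    then show "x \<in> M"
      using span_minimal[OF BM M] by blast
  next
    fix x assume "x \<in> M"
    then have "proj x \<in> span (insert v B)"
      using B(2) span_mono[of B "insert v B"] by blast
    moreover have "scale (w * representation E0 x e) v \<in> span (insert v B)"
      by (intro span_scale span_base) simp
    ultimately have "scale (w * representation E0 x e) v + proj x \<in> span (insert v B)"
      by (intro span_add)
    then show "x \<in> span (insert v B)"
      using proj_decomp[of x] by simp
  qed
  ultimately show ?thesis
    unfolding free_subspace_def using BM by blast
qed

lemma free_subspace_if_free_proj_image_of_complement:
  assumes M: "subspace M" and N: "subspace N" and v: "v \<in> N" and cap: "M \<inter> N = {0}"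
    and free: "free_subspace (proj ` M)"
  shows "free_subspace M"
proof -
  interpret proj: module_hom scale scale proj
    by (rule module_hom_proj)
  have "inj_on proj M"
    unfolding proj.inj_on_iff_eq_0[OF M]
  proof (intro ballI impI)
    fix x assume x: "x \<in> M" and "proj x = 0"
    then have "x = scale (w * representation E0 x e) v"
      using proj_decomp[of x] by simp
    then have "x \<in> N"
      using N v subspace_scale by metis
    then show "x = 0"
      using x cap by blast
  qed
  then show ?thesis
    using proj.free_subspace_if_inj_on M free by blast
qed

lemma free_subspace_if_free_proj_images:
  assumes F: "insert e F \<subseteq> E0" "e \<notin> F" and M: "subspace M" and N: "subspace N"
    and sum: "{x + y |x y. x \<in> M \<and> y \<in> N} = span (insert e F)"
    and cap: "M \<inter> N = {0}" and v: "v \<in> M \<or> v \<in> N"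
    and free: "\<And>M' N'. subspace M' \<Longrightarrow> subspace N' \<Longrightarrow>
      {x + y |x y. x \<in> M' \<and> y \<in> N'} = span F \<Longrightarrow> M' \<inter> N' = {0} \<Longrightarrow> free_subspace M'"
  shows "free_subspace M"
proof -
  interpret proj: module_hom scale scale proj
    by (rule module_hom_proj)
  have "{x + y |x y. x \<in> proj ` M \<and> y \<in> proj ` N} = span F \<and> proj ` M \<inter> proj ` N = {0}"
    using v
  proof
    assume "v \<in> M"
    then show ?thesis
      using proj_direct_sum[OF F M N sum cap] by simp
  next
    assume "v \<in> N"
    have sum_NM: "{x + y |x y. x \<in> N \<and> y \<in> M} = span (insert e F)"
      using sum_set_commute[of N M] sum by (rule trans)
    have cap_NM: "N \<inter> M = {0}"
      using cap by (simp only: Int_commute)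
    note proj_NM = proj_direct_sum[OF F N M sum_NM cap_NM \<open>v \<in> N\<close>]
    show ?thesis
    proof
      show "{x + y |x y. x \<in> proj ` M \<and> y \<in> proj ` N} = span F"
        using sum_set_commute[of "proj ` M" "proj ` N"] proj_NM(1) by (rule trans)
      show "proj ` M \<inter> proj ` N = {0}"
        using proj_NM(2) by (simp only: Int_commute)
    qed
  qed
  then have proj_sum: "{x + y |x y. x \<in> proj ` M \<and> y \<in> proj ` N} = span F"
    and proj_cap: "proj ` M \<inter> proj ` N = {0}"
    by simp_all
  have proj_free: "free_subspace (proj ` M)"
    by (rule free[OF proj.subspace_image[OF M] proj.subspace_image[OF N] proj_sum proj_cap])
  from v show ?thesis
  proof
    assume "v \<in> M"
    then show ?thesis
      by (rule free_subspace_if_free_proj_image_of_mem[OF M _ proj_free])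
  next
    assume "v \<in> N"
    then show ?thesis
      by (rule free_subspace_if_free_proj_image_of_complement[OF M N _ cap proj_free])
  qed
qed

end

context module
begin

lemma free_subspace_if_direct_sum_span:
  assumes local: "\<And>x y :: 'a. x + y = 1 \<Longrightarrow> x dvd 1 \<or> y dvd 1"
    and E0: "independent E0" "span E0 = UNIV"
    and "finite E" and "E \<subseteq> E0" and "subspace M" and "subspace N"
    and "{x + y |x y. x \<in> M \<and> y \<in> N} = span E" and "M \<inter> N = {0}"
  shows "free_subspace M"
  using assms(4-)
proof (induction E arbitrary: M N rule: finite_induct)
  case empty
  then have "M = {0}"
    using subspace_0[of N] subspace_0[of M] by force
  then show ?case
    unfolding free_subspace_def using independent_empty by (intro exI[of _ "{}"]) auto
next
  case (insert e F)
  have IH: "free_subspace M'"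
    if "subspace M'" "subspace N'" "{x + y |x y. x \<in> M' \<and> y \<in> N'} = span F" "M' \<inter> N' = {0}"
    for M' N'
    using insert.IH insert.prems(1) that by blast
  obtain a b where ab: "a \<in> M" "b \<in> N" "e = a + b"
    using insert.prems(4) span_base[of e "insert e F"] by blast
  have "representation E0 e e = 1"
    using representation_basis[OF E0(1)] insert.prems(1) by simp
  then have "representation E0 a e + representation E0 b e = 1"
    using representation_add[OF E0(1)] E0(2) ab(3) by simp
  then consider "representation E0 a e dvd 1" | "representation E0 b e dvd 1"
    using local by blast
  then obtain v w where v: "v \<in> M \<or> v \<in> N" "w * representation E0 v e = 1"
  proof cases
    case 1
    then obtain w where "representation E0 a e * w = 1"
      by (metis dvdE)
    then show ?thesis
      using that[of a w] ab(1) by (simp add: mult.commute)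
  next
    case 2
    then obtain w where "representation E0 b e * w = 1"
      by (metis dvdE)
    then show ?thesis
      using that[of b w] ab(2) by (simp add: mult.commute)
  qed
  interpret P: coordinate_projection scale E0 e v w
    using E0 v(2) by unfold_locales
  show ?case
    using P.free_subspace_if_free_proj_images[OF insert.prems(1) insert.hyps(2) insert.prems(2-5) v(1)] IH
    by blast
qed

lemma free_subspace_direct_summand:
  assumes "\<And>x y :: 'a. x + y = 1 \<Longrightarrow> x dvd 1 \<or> y dvd 1"
    and "finite E" and "independent E" and "span E = UNIV"
    and "subspace M" and "subspace N"
    and "{x + y |x y. x \<in> M \<and> y \<in> N} = UNIV" and "M \<inter> N = {0}"
  shows "free_subspace M"
  using free_subspace_if_direct_sum_span[OF assms(1,3,4,2) subset_refl assms(5,6)] assms(4,7,8)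
  by simp

end

section \<open>Codes\<close>

interpretation vs: module "vscale :: 'a::comm_ring_1 \<Rightarrow> 'a ^ 'n \<Rightarrow> 'a ^ 'n"
  by (rule module_vscale)

lemma vs_span_axis: "vs.span (range (\<lambda>i. axis i 1) :: ('a::comm_ring_1 ^ 'n) set) = UNIV"
proof -
  have "v \<in> vs.span (range (\<lambda>i. axis i 1))" for v :: "'a ^ 'n"
  proof -
    have "v = (\<Sum>i\<in>UNIV. vscale (v $ i) (axis i 1))"
      by (simp add: vec_eq_iff vscale_def axis_def if_distrib cong: if_cong)
    also have "\<dots> \<in> vs.span (range (\<lambda>i. axis i 1))"
      by (intro vs.span_sum vs.span_scale vs.span_base) auto
    finally show ?thesis .
  qed
  then show ?thesis
    by auto
qed

lemma vs_independent_axis: "vs.independent (range (\<lambda>i::'n::finite. axis i (1::'a::comm_ring_1)))"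
  unfolding vs.independent_explicit_module
proof (intro allI impI)
  fix t u v
  assume t: "finite t" "t \<subseteq> range (\<lambda>i::'n. axis i (1::'a))"
    and sum_eq_0: "(\<Sum>v\<in>t. vscale (u v) v) = 0" and v: "v \<in> t"
  obtain k where k: "v = axis k 1"
    using t v by auto
  have "0 = (\<Sum>x\<in>t. vscale (u x) x) $ k"
    using sum_eq_0 by simp
  also have "\<dots> = (\<Sum>x\<in>t. if x = v then u x else 0)"
  proof (intro sum_component[THEN trans] sum.cong refl)
    fix x assume "x \<in> t"
    then obtain i where i: "x = axis i 1"
      using t by auto
    have "x $ k = (if i = k then 1 else 0)"
      using i by (simp add: axis_def)
    moreover have "x = v \<longleftrightarrow> i = k"
      using i k by (simp add: axis_eq_axis)
    ultimately show "vscale (u x) x $ k = (if x = v then u x else 0)"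
      by (simp add: vscale_def)
  qed
  also have "\<dots> = u v"
    using t v by simp
  finally show "u v = 0"
    by simp
qed

theorem corollary3p17:
  fixes C1 C2 :: "(('a::{comm_ring_1, finite}) ^ 'n) set"
  assumes "frobenius_local TYPE('a)"
    and "linear_code C1" and "linear_code C2"
    and "{x + y | x y. x \<in> C1 \<and> y \<in> C2} = UNIV"
    and "code_dim (C1 \<inter> C2) = 0"
  shows "free_code C1 \<and> free_code C2"
proof -
  have local: "local_ring TYPE('a)"
    using assms(1) unfolding frobenius_local_def by simp
  have C: "vs.subspace C1" "vs.subspace C2"
    using assms(2,3) unfolding linear_code_def .
  have cap: "C1 \<inter> C2 = {0}"
    using code_dim_eq_0_imp_trivial[OF local _ assms(5)] vs.subspace_0 C by blast
  have units: "\<And>x y :: 'a. x + y = 1 \<Longrightarrow> x dvd 1 \<or> y dvd 1"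
    using local_ring_unit_or_unit[OF local] .
  have basis: "finite (range (\<lambda>i::'n. axis i (1::'a)))"
    "vs.independent (range (\<lambda>i::'n. axis i (1::'a)))"
    "vs.span (range (\<lambda>i::'n. axis i (1::'a))) = UNIV"
    using vs_independent_axis vs_span_axis by simp_all
  have "vs.free_subspace C1"
    using vs.free_subspace_direct_summand[OF units basis C assms(4) cap] .
  moreover have "vs.free_subspace C2"
    using vs.free_subspace_direct_summand[OF units basis C(2,1)] assms(4) cap
      sum_set_commute[of C2 C1] by (simp add: Int_commute)
  ultimately show ?thesis
    unfolding free_code_def vs.free_subspace_def by blast
qed

end
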